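(* For all integers $n,f,k$ with $1\le k\le f\le n-1$, the task $k\text{-TAg}(n,f)$ is not $C$-reducible to $\mathrm{Cons}(n,n-1)$, and hence is not $C$-reducible to $\mathrm{Cons}(n,f)$.
   Context: Model: a finite set of processes runs an asynchronous algorithm communicating by reliable message passing with unbounded delays and speeds; processes fail only by crashing. Time is $\mathcal T=\mathbb N$; a failure pattern $F$ for $\Pi$ is a nondecreasing map $\mathcal T\to2^\Pi$, $Faulty(F)=\bigcup_tF(t)$. A binary agreement problem $P$ for $\Pi$ maps each $(F,\vec V)$, $\vec V\in\{0,1\}^\Pi$, to a nonempty $P(F,\vec V)\subseteq\{0,1\}$; a task is $T=(P,f)$. An algorithm solves $T$ if in every run with $|Faulty(F)|\le f$ and initial values $\vec V$: every correct process eventually decides, decisions are irrevocable, no two processes decide differently, and decisions lie in $P(F,\vec V)$. $k\text{-TAg}_\Pi(F,\vec V)=\{0\}$ if at least $k$ entries of $\vec V$ are $0$; $=\{1\}$ if $\vec V$ is all-ones and $|Faulty(F)|\le k-1$; $=\{0,1\}$ otherwise; $k\text{-TAg}(\Pi,f)=(k\text{-TAg}_\Pi,f)$; $k\text{-TAg}(n,f)$ and $\mathrm{Cons}(n,f)=n\text{-TAg}(n,f)$ are the versions for $\Pi=\{1,\dots,n\}$ ($\mathrm{Cons}(n,n-1)$ is wait-free binary Consensus). Oracles: for $T=(P,f)$ on $\Pi$, $\mathcal O.T$ is a black box with consultants $\Pi$; its history is a sequence of successive consultations, in each of which every consultant may submit at most one query in $\{0,1\}$ and the oracle returns a common response $d$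 with $d\in P(F,\vec V)$ for every $\vec V$ extending the partial query vector (the oracle may use the whole failure pattern, including future crashes), and every correct querier gets the response whenever at least $|\Pi|-f$ consultants query; $\mathcal O.T$ is the most general such oracle. $T_1\le_C T_2$ means there is an algorithm solving $T_1$ whose processes, besides message passing, may consult (repeatedly, waiting for each answer) the single oracle $\mathcal O.T_2$ (for a renamed copy of $T_2$ on the relevant processes). *)

theory Defs
  imports Main
begin

type_synonym fpattern = "nat \<Rightarrow> nat set"
type_synonym problem = "fpattern \<Rightarrow> (nat \<Rightarrow> nat) \<Rightarrow> nat set"
type_synonym task = "problem \<times> nat"

definition Proc :: "nat \<Rightarrow> nat set" where
  "Proc n = {1..n}"

definition failure_pattern :: "nat set \<Rightarrow> fpattern \<Rightarrow> bool" where
  "failure_pattern P F \<longleftrightarrow> mono F \<and> (\<forall>t. F t \<subseteq> P)"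

definition Faulty :: "fpattern \<Rightarrow> nat set" where
  "Faulty F = (\<Union>t. F t)"

definition binvec :: "nat set \<Rightarrow> (nat \<Rightarrow> nat) \<Rightarrow> bool" where
  "binvec P V \<longleftrightarrow> (\<forall>p\<in>P. V p \<in> {0, 1})"

definition kTAg_prob :: "nat \<Rightarrow> nat set \<Rightarrow> problem" where
  "kTAg_prob k P F V =
     (if k \<le> card {p \<in> P. V p = 0} then {0}
      else if (\<forall>p\<in>P. V p = 1) \<and> card (Faulty F) \<le> k - 1 then {1}
      else {0, 1})"

definition kTAg :: "nat \<Rightarrow> nat \<Rightarrow> nat \<Rightarrow> task" where
  "kTAg k n f = (kTAg_prob k (Proc n), f)"

definition Cons :: "nat \<Rightarrow> nat \<Rightarrow> task" where
  "Cons n f = kTAg n n f"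

text \<open>Inputs of a step: spontaneous step, receipt of a message (sender, content),
  or receipt of the oracle response.\<close>
datatype 'm inp = ISpont | IMsg nat 'm | IResp nat

text \<open>A (deterministic) algorithm: initial state from process id and initial value;
  a transition producing new state, messages (destination, content) to send, and
  optionally a query to the oracle; the decision (write-once, checked in the spec).\<close>
record ('s, 'm) algorithm =
  init :: "nat \<Rightarrow> nat \<Rightarrow> 's"
  trans :: "nat \<Rightarrow> 's \<Rightarrow> 'm inp \<Rightarrow> 's \<times> (nat \<times> 'm) list \<times> nat option"
  decision :: "'s \<Rightarrow> nat option"

text \<open>A run: at each time at most one process takes a step with a given input;
  src t identifies the send event (send time, index in output list) of a delivered
  message; st gives the local states; resp j is the common response of the oracle
  in consultation j.\<close>
record ('s, 'm) run =
  sched :: "nat \<Rightarrow> (nat \<times> 'm inp) option"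
  src :: "nat \<Rightarrow> nat \<times> nat"
  st :: "nat \<Rightarrow> nat \<Rightarrow> 's"
  resp :: "nat \<Rightarrow> nat"

definition step_out :: "('s, 'm) algorithm \<Rightarrow> ('s, 'm) run \<Rightarrow> nat
    \<Rightarrow> ('s \<times> (nat \<times> 'm) list \<times> nat option) option" where
  "step_out A r t = (case sched r t of None \<Rightarrow> None
                      | Some (p, x) \<Rightarrow> Some (trans A p (st r t p) x))"

definition sent :: "('s, 'm) algorithm \<Rightarrow> ('s, 'm) run \<Rightarrow> nat \<Rightarrow> (nat \<times> 'm) list" where
  "sent A r t = (case step_out A r t of None \<Rightarrow> [] | Some y \<Rightarrow> fst (snd y))"

definition queried :: "('s, 'm) algorithm \<Rightarrow> ('s, 'm) run \<Rightarrow> nat \<Rightarrow> nat option" where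
  "queried A r t = (case step_out A r t of None \<Rightarrow> None | Some y \<Rightarrow> snd (snd y))"

definition steps_of :: "('s, 'm) run \<Rightarrow> nat \<Rightarrow> nat \<Rightarrow> bool" where
  "steps_of r p t \<longleftrightarrow> (\<exists>x. sched r t = Some (p, x))"

definition is_recv :: "('s, 'm) run \<Rightarrow> nat \<Rightarrow> bool" where
  "is_recv r t \<longleftrightarrow> (\<exists>p q m. sched r t = Some (p, IMsg q m))"

definition is_query_of :: "('s, 'm) algorithm \<Rightarrow> ('s, 'm) run \<Rightarrow> nat \<Rightarrow> nat \<Rightarrow> bool" where
  "is_query_of A r p t \<longleftrightarrow> steps_of r p t \<and> queried A r t \<noteq> None"

definition is_resp_of :: "('s, 'm) run \<Rightarrow> nat \<Rightarrow> nat \<Rightarrow> bool" where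
  "is_resp_of r p t \<longleftrightarrow> (\<exists>d. sched r t = Some (p, IResp d))"

definition qcount :: "('s, 'm) algorithm \<Rightarrow> ('s, 'm) run \<Rightarrow> nat \<Rightarrow> nat \<Rightarrow> nat" where
  "qcount A r t p = card {s. s < t \<and> is_query_of A r p s}"

definition rcount :: "('s, 'm) run \<Rightarrow> nat \<Rightarrow> nat \<Rightarrow> nat" where
  "rcount r t p = card {s. s < t \<and> is_resp_of r p s}"

definition pending :: "('s, 'm) algorithm \<Rightarrow> ('s, 'm) run \<Rightarrow> nat \<Rightarrow> nat \<Rightarrow> bool" where
  "pending A r t p \<longleftrightarrow> rcount r t p < qcount A r t p"

text \<open>p submits query value v in consultation j (the j-th query of p, counting from 0).\<close>
definition query_val :: "('s, 'm) algorithm \<Rightarrow> ('s, 'm) run \<Rightarrow> nat \<Rightarrow> nat \<Rightarrow> nat \<Rightarrow> bool" where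
  "query_val A r j p v \<longleftrightarrow>
     (\<exists>s. is_query_of A r p s \<and> qcount A r s p = j \<and> queried A r s = Some v)"

definition queries_in :: "('s, 'm) algorithm \<Rightarrow> ('s, 'm) run \<Rightarrow> nat \<Rightarrow> nat \<Rightarrow> bool" where
  "queries_in A r j p \<longleftrightarrow> (\<exists>v. query_val A r j p v)"

text \<open>Admissible runs of algorithm A on processes Proc n, with failure pattern F,
  initial values V, consulting the most general oracle for task (Po, fo).\<close>
definition admissible :: "('s, 'm) algorithm \<Rightarrow> nat \<Rightarrow> problem \<Rightarrow> nat
    \<Rightarrow> fpattern \<Rightarrow> (nat \<Rightarrow> nat) \<Rightarrow> ('s, 'm) run \<Rightarrow> bool" where
  "admissible A n Po fo F V r \<longleftrightarrow>
     \<comment> \<open>initial states\<close>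
     (\<forall>p. st r 0 p = init A p (V p))
   \<and> \<comment> \<open>no step: nothing changes\<close>
     (\<forall>t. sched r t = None \<longrightarrow> st r (Suc t) = st r t)
   \<and> \<comment> \<open>a step by a process of Proc n that has not crashed\<close>
     (\<forall>t p x. sched r t = Some (p, x) \<longrightarrow>
        p \<in> Proc n \<and> p \<notin> F t \<and>
        st r (Suc t) = (st r t)(p := fst (trans A p (st r t p) x)))
   \<and> \<comment> \<open>every received message was sent earlier to the receiver by the claimed sender\<close>
     (\<forall>t p q m. sched r t = Some (p, IMsg q m) \<longrightarrow>
        fst (src r t) < t \<and> steps_of r q (fst (src r t)) \<and>
        snd (src r t) < length (sent A r (fst (src r t))) \<and>
        sent A r (fst (src r t)) ! snd (src r t) = (p, m))
   \<and> \<comment> \<open>no duplication\<close>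
     inj_on (src r) {t. is_recv r t}
   \<and> \<comment> \<open>an oracle response answers the pending query, with the common response
         of its consultation\<close>
     (\<forall>t p d. sched r t = Some (p, IResp d) \<longrightarrow>
        pending A r t p \<and> d = resp r (rcount r t p))
   \<and> \<comment> \<open>a process waits for the answer to its query\<close>
     (\<forall>t p x. sched r t = Some (p, x) \<and> pending A r t p \<longrightarrow> (\<exists>d. x = IResp d))
   \<and> \<comment> \<open>oracle safety: the response lies in Po F W for every W extending the
         partial query vector of the consultation\<close>
     (\<forall>j. (\<exists>t p. is_resp_of r p t \<and> rcount r t p = j) \<longrightarrow>
        (\<forall>W. binvec (Proc n) W \<and> (\<forall>p v. p \<in> Proc n \<and> query_val A r j p v \<longrightarrow> W p = v)
             \<longrightarrow> resp r j \<in> Po F W))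
   \<and> \<comment> \<open>oracle liveness: if at least n - fo consultants query in consultation j,
         every correct querier gets the response\<close>
     (\<forall>j. n - fo \<le> card {p \<in> Proc n. queries_in A r j p} \<longrightarrow>
        (\<forall>p \<in> Proc n - Faulty F. queries_in A r j p \<longrightarrow>
            (\<exists>t. is_resp_of r p t \<and> rcount r t p = j)))
   \<and> \<comment> \<open>correct processes take infinitely many steps (unless waiting forever on the oracle)\<close>
     (\<forall>p \<in> Proc n - Faulty F. \<forall>t. \<exists>t' \<ge> t.
        steps_of r p t' \<or> (\<forall>t'' \<ge> t'. pending A r t'' p))
   \<and> \<comment> \<open>reliable channels (unless the receiver waits forever on the oracle)\<close>
     (\<forall>s i p. i < length (sent A r s) \<and> fst (sent A r s ! i) = p \<and> p \<in> Proc n - Faulty F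
        \<longrightarrow> (\<exists>t. is_recv r t \<and> src r t = (s, i)) \<or> (\<exists>t. \<forall>t' \<ge> t. pending A r t' p))"

definition solves_with :: "nat \<Rightarrow> ('s, 'm) algorithm \<Rightarrow> task \<Rightarrow> task \<Rightarrow> bool" where
  "solves_with n A T Orc \<longleftrightarrow>
    (\<forall>F V r. failure_pattern (Proc n) F \<and> card (Faulty F) \<le> snd T \<and> binvec (Proc n) V
        \<and> admissible A n (fst Orc) (snd Orc) F V r \<longrightarrow>
       (\<forall>p \<in> Proc n - Faulty F. \<exists>t d. decision A (st r t p) = Some d)
     \<and> (\<forall>p t t' d. p \<in> Proc n \<and> t \<le> t' \<and> decision A (st r t p) = Some d
           \<longrightarrow> decision A (st r t' p) = Some d)
     \<and> (\<forall>p q t t' d d'. p \<in> Proc n \<and> q \<in> Proc n \<and> decision A (st r t p) = Some d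
           \<and> decision A (st r t' q) = Some d' \<longrightarrow> d = d')
     \<and> (\<forall>p t d. p \<in> Proc n \<and> decision A (st r t p) = Some d \<longrightarrow> d \<in> fst T F V))"

end

theory Submission
  imports Defs
begin

text \<open>An oracle for consensus cannot help against asynchrony: \<open>k\<close> crashed processes are
  indistinguishable from \<open>k\<close> slow ones. Let processes \<open>1..k\<close> start with \<open>0\<close>, the others with
  \<open>1\<close>, and let \<open>1..k\<close> crash at once, while the others run round robin with reliable messages and an
  oracle that answers every consultation with the value of one of its queriers (a legal consensus
  oracle). Since \<open>k\<close> inputs are \<open>0\<close>, process \<open>n\<close> eventually decides \<open>0\<close>, at some time \<open>T\<close>.
  Now start everybody with \<open>1\<close> and crash only \<open>1..k-1\<close>, but keep process \<open>k\<close> asleep until \<open>T\<close>: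
  up to \<open>T\<close> nothing observable changes, so \<open>n\<close> again decides \<open>0\<close>, although with all inputs \<open>1\<close> and
  fewer than \<open>k\<close> failures the only admissible decision is \<open>1\<close>. The oracle used here answers every
  querier, so the argument works for consensus oracles of any resilience.\<close>

lemma card_Collect_less_Suc:
  "card {s. s < Suc t \<and> P s} = card {s. s < t \<and> P s} + (if P t then 1 else 0)"
proof -
  have "{s. s < Suc t \<and> P s} = {s. s < t \<and> P s} \<union> (if P t then {t} else {})"
    by (auto simp: less_Suc_eq)
  then show ?thesis by auto
qed

lemma kTAg_prob_full_contains_input:
  assumes p: "p \<in> Proc n" and W: "binvec (Proc n) W"
  shows "W p \<in> kTAg_prob n (Proc n) F W"
proof (cases "n \<le> card {q \<in> Proc n. W q = 0}")
  case True
  have "{q \<in> Proc n. W q = 0} = Proc n"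
    by (rule card_seteq) (use True in \<open>auto simp: Proc_def\<close>)
  then show ?thesis using True p by (auto simp: kTAg_prob_def)
next
  case False
  then show ?thesis using p W by (auto simp: kTAg_prob_def binvec_def)
qed

definition round_robin :: "nat \<Rightarrow> nat \<Rightarrow> nat \<Rightarrow> nat" where
  "round_robin a m t = a + t mod m"

lemma round_robin_bounds: "0 < m \<Longrightarrow> a \<le> round_robin a m t \<and> round_robin a m t < a + m"
  by (simp add: round_robin_def)

lemma round_robin_infinitely_often:
  assumes "a \<le> p" and "p < a + m"
  shows "\<exists>t'\<ge>t. round_robin a m t' = p"
proof (intro exI conjI)
  have "t \<le> t * m" using assms by simp
  then show "t \<le> t * m + (p - a)" by linarith
  have "(t * m + (p - a)) mod m = p - a"
    using assms by (subst mod_mult_self3) simp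
  then show "round_robin a m (t * m + (p - a)) = p" using assms by (simp add: round_robin_def)
qed

lemma next_step_of:
  fixes w :: "nat \<Rightarrow> 'a"
  assumes "\<forall>t. \<exists>t'\<ge>t. w t' = p"
  shows "\<exists>t1\<ge>t. w t1 = p \<and> (\<forall>t'. t \<le> t' \<and> t' < t1 \<longrightarrow> w t' \<noteq> p)"
proof -
  let ?P = "\<lambda>t1. t1 \<ge> t \<and> w t1 = p"
  have "?P (LEAST t1. ?P t1)" using assms LeastI_ex[of ?P] by blast
  moreover have "\<forall>t'. t \<le> t' \<and> t' < (LEAST t1. ?P t1) \<longrightarrow> w t' \<noteq> p"
    using not_less_Least by blast
  ultimately show ?thesis by blast
qed

section \<open>Canonical executions\<close>

text \<open>An inbox entry \<open>(q, m, (s, i))\<close> is the message \<open>m\<close> that \<open>q\<close> sent as the \<open>i\<close>-th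
  output of the step at time \<open>s\<close>; the pair \<open>(s, i)\<close> is what \<^const>\<open>src\<close> reports on its receipt.\<close>
record ('s, 'm) config =
  lstates :: "nat \<Rightarrow> 's"
  inbox :: "nat \<Rightarrow> (nat \<times> 'm \<times> (nat \<times> nat)) list"
  n_queries :: "nat \<Rightarrow> nat"
  n_resps :: "nat \<Rightarrow> nat"
  last_query :: "nat \<Rightarrow> nat"
  fixed_resp :: "nat \<Rightarrow> nat option"

abbreviation msg_id :: "nat \<times> 'm \<times> (nat \<times> nat) \<Rightarrow> nat \<times> nat" where
  "msg_id e \<equiv> snd (snd e)"

text \<open>The response of consultation \<open>j\<close> is fixed when the first querier is answered in it, to
  that querier's own query value; so it is always one of the submitted values and the oracle
  behaves as a consensus oracle.\<close>
definition oracle_answer :: "('s, 'm) config \<Rightarrow> nat \<Rightarrow> nat" where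
  "oracle_answer c p = (case fixed_resp c (n_resps c p) of Some d \<Rightarrow> d | None \<Rightarrow> last_query c p)"

definition next_input :: "('s, 'm) config \<Rightarrow> nat \<Rightarrow> 'm inp" where
  "next_input c p =
    (if n_resps c p < n_queries c p then IResp (oracle_answer c p)
     else case inbox c p of [] \<Rightarrow> ISpont | e # _ \<Rightarrow> IMsg (fst e) (fst (snd e)))"

definition msgs_to :: "nat \<Rightarrow> nat \<Rightarrow> (nat \<times> 'm) list \<Rightarrow> nat \<Rightarrow> (nat \<times> 'm \<times> (nat \<times> nat)) list" where
  "msgs_to p t out q =
    map (\<lambda>i. (p, snd (out ! i), (t, i))) (filter (\<lambda>i. fst (out ! i) = q) [0..<length out])"

definition step_config :: "('s, 'm) algorithm \<Rightarrow> nat \<Rightarrow> nat \<Rightarrow> ('s, 'm) config \<Rightarrow> ('s, 'm) config" where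
  "step_config A p t c =
    (let y = trans A p (lstates c p) (next_input c p); pend = n_resps c p < n_queries c p in
     \<lparr>lstates = (lstates c)(p := fst y),
      inbox = (\<lambda>q. (if q = p \<and> \<not> pend \<and> inbox c p \<noteq> [] then tl (inbox c q) else inbox c q)
                   @ msgs_to p t (fst (snd y)) q),
      n_queries = (if snd (snd y) = None then n_queries c else (n_queries c)(p := Suc (n_queries c p))),
      n_resps = (if pend then (n_resps c)(p := Suc (n_resps c p)) else n_resps c),
      last_query = (case snd (snd y) of None \<Rightarrow> last_query c | Some v \<Rightarrow> (last_query c)(p := v)),
      fixed_resp = (if pend then (fixed_resp c)(n_resps c p := Some (oracle_answer c p))
                    else fixed_resp c)\<rparr>)"

primrec configs :: "('s, 'm) algorithm \<Rightarrow> (nat \<Rightarrow> nat) \<Rightarrow> (nat \<Rightarrow> nat) \<Rightarrow> nat \<Rightarrow> ('s, 'm) config" where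
  "configs A V w 0 =
     \<lparr>lstates = (\<lambda>p. init A p (V p)), inbox = (\<lambda>p. []), n_queries = (\<lambda>p. 0), n_resps = (\<lambda>p. 0),
      last_query = (\<lambda>p. 0), fixed_resp = (\<lambda>j. None)\<rparr>"
| "configs A V w (Suc t) = step_config A (w t) t (configs A V w t)"

text \<open>Consultations that are never answered get the junk response \<open>0\<close>; admissibility
  constrains only answered ones.\<close>
definition canonical_resp :: "('s, 'm) algorithm \<Rightarrow> (nat \<Rightarrow> nat) \<Rightarrow> (nat \<Rightarrow> nat) \<Rightarrow> nat \<Rightarrow> nat" where
  "canonical_resp A V w j =
    (if \<exists>t. fixed_resp (configs A V w t) j \<noteq> None
     then the (fixed_resp (configs A V w (LEAST t. fixed_resp (configs A V w t) j \<noteq> None)) j)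
     else 0)"

definition canonical_run :: "('s, 'm) algorithm \<Rightarrow> (nat \<Rightarrow> nat) \<Rightarrow> (nat \<Rightarrow> nat) \<Rightarrow> ('s, 'm) run" where
  "canonical_run A V w =
    \<lparr>sched = (\<lambda>t. Some (w t, next_input (configs A V w t) (w t))),
     src = (\<lambda>t. msg_id (hd (inbox (configs A V w t) (w t)))),
     st = (\<lambda>t. lstates (configs A V w t)),
     resp = canonical_resp A V w\<rparr>"

lemma msgs_to_ids_distinct: "distinct (map msg_id (msgs_to p t out q))"
  by (simp add: msgs_to_def distinct_map inj_on_def)

lemma msgs_to_send_time: "e \<in> set (msgs_to p t out q) \<Longrightarrow> fst (msg_id e) = t"
  by (auto simp: msgs_to_def)

declare configs.simps(2)[simp del]

locale canonical_execution =
  fixes A :: "('s, 'm) algorithm" and V :: "nat \<Rightarrow> nat" and w :: "nat \<Rightarrow> nat"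
begin

abbreviation "cfg \<equiv> configs A V w"
abbreviation "crun \<equiv> canonical_run A V w"
abbreviation "inp t \<equiv> next_input (cfg t) (w t)"
abbreviation "outcome t \<equiv> trans A (w t) (lstates (cfg t) (w t)) (inp t)"
abbreviation "out t \<equiv> fst (snd (outcome t))"
abbreviation "qry t \<equiv> snd (snd (outcome t))"
abbreviation "pend t p \<equiv> n_resps (cfg t) p < n_queries (cfg t) p"

lemma sched_crun: "sched crun t = Some (w t, inp t)"
  by (simp add: canonical_run_def)

lemma src_crun: "src crun t = msg_id (hd (inbox (cfg t) (w t)))"
  by (simp add: canonical_run_def)

lemma st_crun: "st crun t = lstates (cfg t)"
  by (simp add: canonical_run_def)

lemma resp_crun: "resp crun = canonical_resp A V w"
  by (simp add: canonical_run_def)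

lemma step_out_crun: "step_out A crun t = Some (outcome t)"
  by (simp add: step_out_def sched_crun st_crun)

lemma sent_crun: "sent A crun t = out t"
  by (simp add: sent_def step_out_crun)

lemma queried_crun: "queried A crun t = qry t"
  by (simp add: queried_def step_out_crun)

lemma steps_of_crun: "steps_of crun p t \<longleftrightarrow> w t = p"
  by (auto simp: steps_of_def sched_crun)

lemma is_recv_crun: "is_recv crun t \<longleftrightarrow> \<not> pend t (w t) \<and> inbox (cfg t) (w t) \<noteq> []"
  by (auto simp: is_recv_def sched_crun next_input_def split: list.splits)

lemma is_resp_of_crun: "is_resp_of crun p t \<longleftrightarrow> w t = p \<and> pend t p"
  by (auto simp: is_resp_of_def sched_crun next_input_def split: list.splits)

lemma is_query_of_crun: "is_query_of A crun p t \<longleftrightarrow> w t = p \<and> qry t \<noteq> None"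
  by (auto simp: is_query_of_def steps_of_crun queried_crun)

lemma lstates_Suc: "lstates (cfg (Suc t)) = (lstates (cfg t))(w t := fst (outcome t))"
  by (simp add: configs.simps step_config_def Let_def)

lemma n_queries_Suc:
  "n_queries (cfg (Suc t)) p =
     (if w t = p \<and> qry t \<noteq> None then Suc (n_queries (cfg t) p) else n_queries (cfg t) p)"
  by (simp add: configs.simps step_config_def Let_def)

lemma n_resps_Suc:
  "n_resps (cfg (Suc t)) p = (if w t = p \<and> pend t p then Suc (n_resps (cfg t) p) else n_resps (cfg t) p)"
  by (simp add: configs.simps step_config_def Let_def)

lemma inbox_Suc:
  "inbox (cfg (Suc t)) q =
     (if q = w t \<and> \<not> pend t q \<and> inbox (cfg t) q \<noteq> [] then tl (inbox (cfg t) q) else inbox (cfg t) q)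
     @ msgs_to (w t) t (out t) q"
  by (auto simp: configs.simps step_config_def Let_def)

lemma last_query_Suc:
  "last_query (cfg (Suc t)) p = (if w t = p \<and> qry t \<noteq> None then the (qry t) else last_query (cfg t) p)"
  by (auto simp: configs.simps step_config_def Let_def split: option.splits)

lemma fixed_resp_Suc:
  "fixed_resp (cfg (Suc t)) =
     (if pend t (w t) then (fixed_resp (cfg t))(n_resps (cfg t) (w t) := Some (oracle_answer (cfg t) (w t)))
      else fixed_resp (cfg t))"
  by (simp add: configs.simps step_config_def Let_def)

lemma qcount_crun: "qcount A crun t p = n_queries (cfg t) p"
  by (induction t) (auto simp: qcount_def card_Collect_less_Suc is_query_of_crun n_queries_Suc)

lemma rcount_crun: "rcount crun t p = n_resps (cfg t) p"
  by (induction t) (auto simp: rcount_def card_Collect_less_Suc is_resp_of_crun n_resps_Suc)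

lemma pending_crun: "pending A crun t p \<longleftrightarrow> pend t p"
  by (simp add: pending_def qcount_crun rcount_crun)

lemma n_resps_le_n_queries:
  "n_resps (cfg t) p \<le> n_queries (cfg t) p \<and> n_queries (cfg t) p \<le> Suc (n_resps (cfg t) p)"
  by (induction t) (auto simp: n_queries_Suc n_resps_Suc)

lemma counts_after_query:
  assumes "w t = p" and "qry t \<noteq> None"
  shows "n_resps (cfg (Suc t)) p = n_queries (cfg t) p \<and> n_queries (cfg (Suc t)) p = Suc (n_queries (cfg t) p)"
  using assms n_resps_le_n_queries[of t p] by (auto simp: n_queries_Suc n_resps_Suc)

lemma pending_query_is_last_query:
  "pend t p \<Longrightarrow>
     \<exists>s<t. w s = p \<and> qry s = Some (last_query (cfg t) p) \<and> n_queries (cfg s) p = n_resps (cfg t) p"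
proof (induction t)
  case 0
  then show ?case by simp
next
  case (Suc t)
  show ?case
  proof (cases "w t = p \<and> qry t \<noteq> None")
    case True
    then show ?thesis
      using counts_after_query[of t p] by (intro exI[of _ t]) (auto simp: last_query_Suc)
  next
    case False
    then have unchanged: "n_queries (cfg (Suc t)) p = n_queries (cfg t) p"
      "last_query (cfg (Suc t)) p = last_query (cfg t) p"
      by (auto simp: n_queries_Suc last_query_Suc)
    then have "pend t p \<and> n_resps (cfg (Suc t)) p = n_resps (cfg t) p"
      using Suc.prems n_resps_le_n_queries[of t p] by (auto simp: n_resps_Suc split: if_splits)
    then show ?thesis using Suc.IH unchanged by (metis less_Suc_eq)
  qed
qed

lemma fixed_resp_mono: "t \<le> t' \<Longrightarrow> fixed_resp (cfg t) j = Some d \<Longrightarrow> fixed_resp (cfg t') j = Some d"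
  by (induction t' rule: dec_induct) (auto simp: fixed_resp_Suc oracle_answer_def)

lemma canonical_resp_eq:
  assumes "fixed_resp (cfg t) j = Some d"
  shows "canonical_resp A V w j = d"
proof -
  let ?t0 = "LEAST t. fixed_resp (cfg t) j \<noteq> None"
  have ex: "\<exists>t. fixed_resp (cfg t) j \<noteq> None" using assms by auto
  have "fixed_resp (cfg ?t0) j \<noteq> None" by (rule LeastI_ex[OF ex])
  then obtain d0 where d0: "fixed_resp (cfg ?t0) j = Some d0" by blast
  have "fixed_resp (cfg (max t ?t0)) j = Some d" "fixed_resp (cfg (max t ?t0)) j = Some d0"
    using fixed_resp_mono[OF max.cobounded1 assms] fixed_resp_mono[OF max.cobounded2 d0] .
  then show ?thesis using ex d0 by (simp add: canonical_resp_def)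
qed

lemma fixed_resp_is_query:
  "fixed_resp (cfg t) j = Some d \<Longrightarrow> \<exists>s. qry s = Some d \<and> n_queries (cfg s) (w s) = j"
proof (induction t arbitrary: d)
  case 0
  then show ?case by simp
next
  case (Suc t)
  show ?case
  proof (cases "pend t (w t) \<and> j = n_resps (cfg t) (w t)")
    case True
    then have d: "d = oracle_answer (cfg t) (w t)" using Suc.prems by (simp add: fixed_resp_Suc)
    show ?thesis
    proof (cases "fixed_resp (cfg t) j")
      case None
      then have "d = last_query (cfg t) (w t)" using d True by (simp add: oracle_answer_def)
      then show ?thesis using pending_query_is_last_query[of t "w t"] True by metis
    next
      case (Some d')
      then show ?thesis using d True Suc.IH by (simp add: oracle_answer_def)
    qed
  next
    case False
    then have "fixed_resp (cfg t) j = Some d"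
      using Suc.prems by (auto simp: fixed_resp_Suc split: if_splits)
    then show ?thesis using Suc.IH by blast
  qed
qed

lemma inbox_entry_sent:
  "(q, m, s, i) \<in> set (inbox (cfg t) p) \<Longrightarrow> s < t \<and> w s = q \<and> i < length (out s) \<and> out s ! i = (p, m)"
proof (induction t arbitrary: q m s i)
  case 0
  then show ?case by simp
next
  case (Suc t)
  show ?case
  proof (cases "(q, m, s, i) \<in> set (msgs_to (w t) t (out t) p)")
    case True
    then show ?thesis by (auto simp: msgs_to_def intro: prod_eqI)
  next
    case False
    then have "(q, m, s, i) \<in> set (inbox (cfg t) p)"
      using Suc.prems by (auto simp: inbox_Suc split: if_splits dest: list.set_sel(2))
    then show ?thesis using Suc.IH by fastforce
  qed
qed

lemma inbox_send_time_less: "e \<in> set (inbox (cfg t) p) \<Longrightarrow> fst (msg_id e) < t"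
  using inbox_entry_sent[of "fst e" "fst (snd e)" "fst (msg_id e)" "snd (msg_id e)" t p] by auto

lemma recv_sched: "is_recv crun t \<Longrightarrow> \<exists>q m. sched crun t = Some (w t, IMsg q m)"
  by (auto simp: is_recv_def sched_crun)

lemma recv_head_of_inbox:
  "is_recv crun t \<Longrightarrow> inbox (cfg t) (w t) \<noteq> [] \<and> src crun t = msg_id (hd (inbox (cfg t) (w t)))"
  by (simp add: is_recv_crun src_crun)

lemma src_send_time_less: "is_recv crun t \<Longrightarrow> fst (src crun t) < t"
  using recv_head_of_inbox inbox_send_time_less hd_in_set by metis

lemma recv_from_sender:
  assumes "sched crun t = Some (p, IMsg q m)"
  shows "fst (src crun t) < t \<and> steps_of crun q (fst (src crun t))
    \<and> snd (src crun t) < length (sent A crun (fst (src crun t)))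
    \<and> sent A crun (fst (src crun t)) ! snd (src crun t) = (p, m)"
proof -
  have p: "p = w t" and inp: "inp t = IMsg q m" using assms by (auto simp: sched_crun)
  then obtain s i rest where b: "inbox (cfg t) p = (q, m, s, i) # rest"
    by (auto simp: next_input_def split: if_splits list.splits)
  then have "src crun t = (s, i)" using p by (simp add: src_crun)
  moreover have "s < t" "w s = q" "i < length (out s)" "out s ! i = (p, m)"
    using inbox_entry_sent[of q m s i t p] b by auto
  ultimately show ?thesis by (simp add: sent_crun steps_of_crun)
qed

lemma inbox_ids_distinct: "distinct (map msg_id (inbox (cfg t) p))"
proof (induction t)
  case 0
  then show ?case by simp
next
  case (Suc t)
  let ?b = "inbox (cfg t) p" and ?N = "msgs_to (w t) t (out t) p"
  define B where "B = (if p = w t \<and> \<not> pend t p \<and> ?b \<noteq> [] then tl ?b else ?b)"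
  have step: "inbox (cfg (Suc t)) p = B @ ?N" by (auto simp: inbox_Suc B_def)
  have "distinct (map msg_id (tl ?b))" using Suc.IH by (simp add: map_tl distinct_tl)
  then have "distinct (map msg_id B)" using Suc.IH by (auto simp: B_def)
  moreover have "set B \<subseteq> set ?b" by (auto simp: B_def dest: list.set_sel(2))
  then have "msg_id ` set B \<inter> msg_id ` set ?N = {}"
    using inbox_send_time_less msgs_to_send_time by fastforce
  ultimately show ?case unfolding step using msgs_to_ids_distinct by (simp add: distinct_append)
qed

lemma received_not_in_inbox:
  assumes "t1 < t" and "w t1 = p" and recv: "is_recv crun t1"
  shows "src crun t1 \<notin> msg_id ` set (inbox (cfg t) p)"
  using assms(1)
proof (induction t)
  case 0
  then show ?case by simp
next
  case (Suc t)
  let ?b = "inbox (cfg t) p" and ?N = "msgs_to (w t) t (out t) p"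
  have new: "src crun t1 \<notin> msg_id ` set ?N"
    using src_send_time_less[OF recv] Suc.prems msgs_to_send_time by fastforce
  show ?case
  proof (cases "t1 = t")
    case True
    then have b: "?b \<noteq> []" "inbox (cfg (Suc t)) p = tl ?b @ ?N" "src crun t1 = msg_id (hd ?b)"
      using assms(2) recv recv_head_of_inbox[OF recv] by (auto simp: inbox_Suc is_recv_crun)
    have "msg_id (hd ?b) \<notin> msg_id ` set (tl ?b)"
      using inbox_ids_distinct[of t p] b(1) by (cases ?b) auto
    then show ?thesis using new b by auto
  next
    case False
    then have "src crun t1 \<notin> msg_id ` set ?b" using Suc by auto
    moreover have "set (inbox (cfg (Suc t)) p) \<subseteq> set ?b \<union> set ?N"
      by (auto simp: inbox_Suc dest: list.set_sel(2))
    ultimately show ?thesis using new by blast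
  qed
qed

lemma inj_on_src_crun: "inj_on (src crun) {t. is_recv crun t}"
proof -
  have distinct_src: "src crun t1 \<noteq> src crun t2"
    if recv1: "is_recv crun t1" and recv2: "is_recv crun t2" and "t1 < t2" for t1 t2
  proof
    assume same: "src crun t1 = src crun t2"
    obtain q1 m1 q2 m2 where
      "sched crun t1 = Some (w t1, IMsg q1 m1)" "sched crun t2 = Some (w t2, IMsg q2 m2)"
      using recv_sched recv1 recv2 by blast
    then have "sent A crun (fst (src crun t1)) ! snd (src crun t1) = (w t1, m1)"
      "sent A crun (fst (src crun t2)) ! snd (src crun t2) = (w t2, m2)"
      using recv_from_sender by blast+
    \<comment> \<open>the receiver of a message is recorded with it at the sender\<close>
    then have "w t1 = w t2" using same by simp
    then have "src crun t1 \<notin> msg_id ` set (inbox (cfg t2) (w t2))"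
      using received_not_in_inbox[OF \<open>t1 < t2\<close> _ recv1] by blast
    then show False using recv_head_of_inbox[OF recv2] same by simp
  qed
  show ?thesis
  proof (rule inj_onI)
    fix t1 t2 assume "t1 \<in> {t. is_recv crun t}" "t2 \<in> {t. is_recv crun t}" "src crun t1 = src crun t2"
    then show "t1 = t2" using distinct_src by (metis linorder_neqE_nat mem_Collect_eq)
  qed
qed

lemma counts_unchanged_while_idle:
  "a \<le> b \<Longrightarrow> (\<forall>t'. a \<le> t' \<and> t' < b \<longrightarrow> w t' \<noteq> p) \<Longrightarrow>
     n_queries (cfg b) p = n_queries (cfg a) p \<and> n_resps (cfg b) p = n_resps (cfg a) p"
  by (induction b rule: dec_induct) (auto simp: n_queries_Suc n_resps_Suc)

lemma inbox_grows_while_pending: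
  "a \<le> b \<Longrightarrow> (\<forall>t'. a \<le> t' \<and> t' < b \<longrightarrow> w t' = p \<longrightarrow> pend t' p) \<Longrightarrow>
     \<exists>ys. inbox (cfg b) p = inbox (cfg a) p @ ys"
proof (induction b rule: dec_induct)
  case base
  then show ?case by simp
next
  case (step b)
  then obtain ys where "inbox (cfg b) p = inbox (cfg a) p @ ys" by auto
  moreover have "inbox (cfg (Suc b)) p = inbox (cfg b) p @ msgs_to (w b) b (out b) p"
    using step by (auto simp: inbox_Suc)
  ultimately show ?case by auto
qed

lemma query_answered:
  assumes fair: "\<forall>t. \<exists>t'\<ge>t. w t' = p" and "w s = p" and "qry s \<noteq> None"
  shows "\<exists>t. is_resp_of crun p t \<and> rcount crun t p = n_queries (cfg s) p"
proof -
  obtain t1 where t1: "t1 \<ge> Suc s" "w t1 = p" "\<forall>t'. Suc s \<le> t' \<and> t' < t1 \<longrightarrow> w t' \<noteq> p"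
    using next_step_of[OF fair] by blast
  then show ?thesis
    using counts_after_query[OF assms(2,3)] counts_unchanged_while_idle[OF t1(1) t1(3)]
    by (intro exI[of _ t1]) (auto simp: is_resp_of_crun rcount_crun)
qed

lemma ready_or_pending_forever:
  assumes fair: "\<forall>t. \<exists>t'\<ge>t. w t' = p"
  shows "(\<exists>t1\<ge>t. w t1 = p \<and> \<not> pend t1 p \<and> (\<exists>ys. inbox (cfg t1) p = inbox (cfg t) p @ ys))
    \<or> (\<forall>t'\<ge>t. pend t' p)"
proof (cases "\<exists>t1\<ge>t. w t1 = p \<and> \<not> pend t1 p")
  case True
  let ?P = "\<lambda>t1. t1 \<ge> t \<and> w t1 = p \<and> \<not> pend t1 p"
  have "?P (LEAST t1. ?P t1)" by (rule LeastI_ex[OF True])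
  moreover have "\<forall>t'. t \<le> t' \<and> t' < (LEAST t1. ?P t1) \<longrightarrow> w t' = p \<longrightarrow> pend t' p"
    using not_less_Least by blast
  ultimately show ?thesis using inbox_grows_while_pending by blast
next
  case False
  have "pend t' p" if "t' \<ge> t" for t'
  proof -
    obtain t2 where t2: "t2 \<ge> t'" "w t2 = p" "\<forall>t''. t' \<le> t'' \<and> t'' < t2 \<longrightarrow> w t'' \<noteq> p"
      using next_step_of[OF fair] by blast
    then have "pend t2 p" using False that by auto
    then show "pend t' p" using counts_unchanged_while_idle[OF t2(1) t2(3)] by simp
  qed
  then show ?thesis by blast
qed

lemma inbox_entry_delivered:
  assumes fair: "\<forall>t. \<exists>t'\<ge>t. w t' = p"
  shows "idx < length (inbox (cfg t) p) \<Longrightarrow> inbox (cfg t) p ! idx = e \<Longrightarrow>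
    (\<exists>t'. is_recv crun t' \<and> src crun t' = msg_id e) \<or> (\<exists>t0. \<forall>t'\<ge>t0. pend t' p)"
proof (induction idx arbitrary: t)
  case (0 t)
  from ready_or_pending_forever[OF fair, of t] show ?case
  proof (elim disjE exE conjE)
    fix t1 ys assume t1: "w t1 = p" "\<not> pend t1 p" and ys: "inbox (cfg t1) p = inbox (cfg t) p @ ys"
    then have "inbox (cfg t1) p \<noteq> [] \<and> hd (inbox (cfg t1) p) = e"
      using "0" by (cases "inbox (cfg t) p") auto
    then show ?thesis using t1 by (auto simp: is_recv_crun src_crun)
  qed blast
next
  case (Suc i t)
  from ready_or_pending_forever[OF fair, of t] show ?case
  proof (elim disjE exE conjE)
    fix t1 ys assume "t \<le> t1" and t1: "w t1 = p" "\<not> pend t1 p"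
      and ys: "inbox (cfg t1) p = inbox (cfg t) p @ ys"
    \<comment> \<open>the step at \<open>t1\<close> consumes the head of the inbox, moving \<open>e\<close> to position \<open>i\<close>\<close>
    have "inbox (cfg (Suc t1)) p = tl (inbox (cfg t1) p) @ msgs_to (w t1) t1 (out t1) p"
      using t1 ys Suc.prems by (auto simp: inbox_Suc)
    then have "i < length (inbox (cfg (Suc t1)) p) \<and> inbox (cfg (Suc t1)) p ! i = e"
      using ys Suc.prems by (cases "inbox (cfg t) p") (auto simp: nth_append)
    then show ?thesis using Suc.IH by blast
  qed blast
qed

lemma resp_answers_pending:
  assumes "sched crun t = Some (p, IResp d)"
  shows "pending A crun t p \<and> d = resp crun (rcount crun t p)"
proof -
  have p: "p = w t" and "inp t = IResp d" using assms by (auto simp: sched_crun)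
  then have pend: "pend t p" and d: "d = oracle_answer (cfg t) p"
    by (auto simp: next_input_def split: if_splits list.splits)
  then have "fixed_resp (cfg (Suc t)) (n_resps (cfg t) p) = Some d" using p by (simp add: fixed_resp_Suc)
  then have "canonical_resp A V w (n_resps (cfg t) p) = d" by (rule canonical_resp_eq)
  then show ?thesis using pend by (simp add: pending_crun rcount_crun resp_crun)
qed

lemma resp_valid_for_consensus:
  assumes "\<forall>t. w t \<in> Proc n" and "is_resp_of crun p t" and "binvec (Proc n) W"
    and "\<forall>q v. q \<in> Proc n \<and> query_val A crun (rcount crun t p) q v \<longrightarrow> W q = v"
  shows "resp crun (rcount crun t p) \<in> kTAg_prob n (Proc n) F W"
proof -
  let ?j = "n_resps (cfg t) p"
  have "w t = p" "pend t p" using assms(2) by (auto simp: is_resp_of_crun)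
  then have fixed: "fixed_resp (cfg (Suc t)) ?j = Some (oracle_answer (cfg t) p)"
    by (auto simp: fixed_resp_Suc)
  then obtain s where s: "qry s = Some (oracle_answer (cfg t) p)" "n_queries (cfg s) (w s) = ?j"
    using fixed_resp_is_query by blast
  have "resp crun ?j = oracle_answer (cfg t) p"
    using canonical_resp_eq[OF fixed] by (simp add: resp_crun)
  then have "query_val A crun (rcount crun t p) (w s) (resp crun (rcount crun t p))" using s
    by (auto simp: query_val_def is_query_of_crun qcount_crun queried_crun rcount_crun)
  then show ?thesis using assms(1,3,4) kTAg_prob_full_contains_input by metis
qed

lemma queries_answered:
  assumes "\<forall>t. \<exists>t'\<ge>t. w t' = p" and "queries_in A crun j p"
  shows "\<exists>t. is_resp_of crun p t \<and> rcount crun t p = j"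
proof -
  obtain s v where "w s = p" "qry s = Some v" "n_queries (cfg s) p = j"
    using assms(2) by (auto simp: queries_in_def query_val_def is_query_of_crun qcount_crun queried_crun)
  then show ?thesis using query_answered[OF assms(1)] by auto
qed

lemma sent_received_or_pending_forever:
  assumes "\<forall>t. \<exists>t'\<ge>t. w t' = p" and "i < length (sent A crun s)" and "fst (sent A crun s ! i) = p"
  shows "(\<exists>t. is_recv crun t \<and> src crun t = (s, i)) \<or> (\<exists>t. \<forall>t'\<ge>t. pending A crun t' p)"
proof -
  let ?e = "(w s, snd (out s ! i), (s, i))"
  have "?e \<in> set (msgs_to (w s) s (out s) p)" using assms by (auto simp: msgs_to_def sent_crun)
  then have "?e \<in> set (inbox (cfg (Suc s)) p)" by (simp add: inbox_Suc)
  then obtain idx where "idx < length (inbox (cfg (Suc s)) p)" "inbox (cfg (Suc s)) p ! idx = ?e"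
    by (auto simp: in_set_conv_nth)
  then show ?thesis using inbox_entry_delivered[OF assms(1)] by (fastforce simp: pending_crun)
qed

lemma admissible_canonical_run:
  assumes sched_ok: "\<forall>t. w t \<in> Proc n \<and> w t \<notin> F t"
    and fair: "\<forall>p \<in> Proc n - Faulty F. \<forall>t. \<exists>t'\<ge>t. w t' = p"
  shows "admissible A n (kTAg_prob n (Proc n)) fo F V crun"
  unfolding admissible_def
proof (intro conjI)
  show "\<forall>p. st crun 0 p = init A p (V p)" by (simp add: st_crun)
  show "\<forall>t. sched crun t = None \<longrightarrow> st crun (Suc t) = st crun t" by (simp add: sched_crun)
  show "\<forall>t p x. sched crun t = Some (p, x) \<longrightarrow> p \<in> Proc n \<and> p \<notin> F t \<and>
      st crun (Suc t) = (st crun t)(p := fst (trans A p (st crun t p) x))"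
    using sched_ok by (auto simp: sched_crun st_crun lstates_Suc)
  show "\<forall>t p q m. sched crun t = Some (p, IMsg q m) \<longrightarrow>
      fst (src crun t) < t \<and> steps_of crun q (fst (src crun t)) \<and>
      snd (src crun t) < length (sent A crun (fst (src crun t))) \<and>
      sent A crun (fst (src crun t)) ! snd (src crun t) = (p, m)"
    using recv_from_sender by blast
  show "inj_on (src crun) {t. is_recv crun t}" by (rule inj_on_src_crun)
  show "\<forall>t p d. sched crun t = Some (p, IResp d) \<longrightarrow> pending A crun t p \<and> d = resp crun (rcount crun t p)"
    using resp_answers_pending by blast
  show "\<forall>t p x. sched crun t = Some (p, x) \<and> pending A crun t p \<longrightarrow> (\<exists>d. x = IResp d)"
    by (auto simp: sched_crun pending_crun next_input_def)
  show "\<forall>j. (\<exists>t p. is_resp_of crun p t \<and> rcount crun t p = j) \<longrightarrow>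
      (\<forall>W. binvec (Proc n) W \<and> (\<forall>p v. p \<in> Proc n \<and> query_val A crun j p v \<longrightarrow> W p = v)
        \<longrightarrow> resp crun j \<in> kTAg_prob n (Proc n) F W)"
    using sched_ok resp_valid_for_consensus by blast
  show "\<forall>j. n - fo \<le> card {p \<in> Proc n. queries_in A crun j p} \<longrightarrow>
      (\<forall>p \<in> Proc n - Faulty F. queries_in A crun j p \<longrightarrow> (\<exists>t. is_resp_of crun p t \<and> rcount crun t p = j))"
    using fair queries_answered by blast
  show "\<forall>p \<in> Proc n - Faulty F. \<forall>t. \<exists>t' \<ge> t. steps_of crun p t' \<or> (\<forall>t'' \<ge> t'. pending A crun t'' p)"
    using fair by (auto simp: steps_of_crun)
  show "\<forall>s i p. i < length (sent A crun s) \<and> fst (sent A crun s ! i) = p \<and> p \<in> Proc n - Faulty F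
      \<longrightarrow> (\<exists>t. is_recv crun t \<and> src crun t = (s, i)) \<or> (\<exists>t. \<forall>t' \<ge> t. pending A crun t' p)"
    using fair sent_received_or_pending_forever by blast
qed

end

section \<open>Two indistinguishable runs\<close>

lemma configs_agree_outside:
  assumes sched: "\<forall>t<T. w1 t = w2 t \<and> w1 t \<notin> K" and inputs: "\<forall>p. p \<notin> K \<longrightarrow> V1 p = V2 p"
  shows "t \<le> T \<Longrightarrow>
    inbox (configs A V1 w1 t) = inbox (configs A V2 w2 t)
    \<and> n_queries (configs A V1 w1 t) = n_queries (configs A V2 w2 t)
    \<and> n_resps (configs A V1 w1 t) = n_resps (configs A V2 w2 t)
    \<and> last_query (configs A V1 w1 t) = last_query (configs A V2 w2 t)
    \<and> fixed_resp (configs A V1 w1 t) = fixed_resp (configs A V2 w2 t)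
    \<and> (\<forall>p. p \<notin> K \<longrightarrow> lstates (configs A V1 w1 t) p = lstates (configs A V2 w2 t) p)"
proof (induction t)
  case 0
  show ?case using inputs by simp
next
  case (Suc t)
  let ?c1 = "configs A V1 w1 t" and ?c2 = "configs A V2 w2 t"
  have IH: "inbox ?c1 = inbox ?c2" "n_queries ?c1 = n_queries ?c2" "n_resps ?c1 = n_resps ?c2"
    "last_query ?c1 = last_query ?c2" "fixed_resp ?c1 = fixed_resp ?c2"
    "\<forall>p. p \<notin> K \<longrightarrow> lstates ?c1 p = lstates ?c2 p"
    using Suc by auto
  have "t < T" using Suc.prems by simp
  then have "w1 t = w2 t \<and> w1 t \<notin> K" using sched by blast
  then have w: "w2 t = w1 t" "w1 t \<notin> K" by auto
  have answer: "oracle_answer ?c1 (w1 t) = oracle_answer ?c2 (w1 t)"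
    by (simp only: oracle_answer_def IH)
  then have input: "next_input ?c1 (w1 t) = next_input ?c2 (w1 t)"
    using IH by (simp add: next_input_def)
  show ?case using IH w answer input by (auto simp: configs.simps(2) step_config_def Let_def)
qed

lemma solves_with_canonical_run:
  assumes solves: "solves_with n A T (Cons n fo)"
    and "failure_pattern (Proc n) F" and "card (Faulty F) \<le> snd T" and "binvec (Proc n) V"
    and sched_ok: "\<forall>t. w t \<in> Proc n \<and> w t \<notin> F t"
    and fair: "\<forall>p \<in> Proc n - Faulty F. \<forall>t. \<exists>t'\<ge>t. w t' = p"
  shows "\<forall>p \<in> Proc n - Faulty F. \<exists>t d. decision A (lstates (configs A V w t) p) = Some d"
    and "\<forall>p t d. p \<in> Proc n \<and> decision A (lstates (configs A V w t) p) = Some d \<longrightarrow> d \<in> fst T F V"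
proof -
  have "admissible A n (fst (Cons n fo)) (snd (Cons n fo)) F V (canonical_run A V w)"
    using canonical_execution.admissible_canonical_run[OF sched_ok fair]
    by (simp add: Cons_def kTAg_def)
  then have "(\<forall>p \<in> Proc n - Faulty F. \<exists>t d. decision A (st (canonical_run A V w) t p) = Some d)
    \<and> (\<forall>p t d. p \<in> Proc n \<and> decision A (st (canonical_run A V w) t p) = Some d \<longrightarrow> d \<in> fst T F V)"
    using solves assms(2-4) unfolding solves_with_def by blast
  then show "\<forall>p \<in> Proc n - Faulty F. \<exists>t d. decision A (lstates (configs A V w t) p) = Some d"
    and "\<forall>p t d. p \<in> Proc n \<and> decision A (lstates (configs A V w t) p) = Some d \<longrightarrow> d \<in> fst T F V"
    by (simp_all add: canonical_execution.st_crun)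
qed

definition k_zeros :: "nat \<Rightarrow> nat \<Rightarrow> nat" where
  "k_zeros k p = (if p \<le> k then 0 else 1)"

lemma decides_zero_when_k_crashed:
  fixes A :: "('s, 'm) algorithm"
  assumes solves: "solves_with n A (kTAg k n f) (Cons n fo)" and "k \<le> f" and "k < n"
  shows "\<exists>T. decision A (lstates (configs A (k_zeros k) (round_robin (Suc k) (n - k)) T) n) = Some 0"
proof -
  let ?w = "round_robin (Suc k) (n - k)" and ?F = "\<lambda>t::nat. {1..k}"
  have pattern: "failure_pattern (Proc n) ?F"
    using assms by (auto simp: failure_pattern_def mono_def Proc_def)
  have bound: "card (Faulty ?F) \<le> snd (kTAg k n f)" using assms by (simp add: Faulty_def kTAg_def)
  have inputs: "binvec (Proc n) (k_zeros k)" by (simp add: binvec_def k_zeros_def)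
  have sched_ok: "\<forall>t. ?w t \<in> Proc n \<and> ?w t \<notin> ?F t"
  proof
    fix t
    have "Suc k \<le> ?w t \<and> ?w t < Suc k + (n - k)" using assms by (intro round_robin_bounds) simp
    then show "?w t \<in> Proc n \<and> ?w t \<notin> ?F t" using assms by (auto simp: Proc_def)
  qed
  have fair: "\<forall>p \<in> Proc n - Faulty ?F. \<forall>t. \<exists>t'\<ge>t. ?w t' = p"
  proof (intro ballI allI)
    fix p t assume "p \<in> Proc n - Faulty ?F"
    then have "Suc k \<le> p" "p < Suc k + (n - k)" using assms by (auto simp: Faulty_def Proc_def)
    then show "\<exists>t'\<ge>t. ?w t' = p" by (rule round_robin_infinitely_often)
  qed
  note run = solves_with_canonical_run[OF solves pattern bound inputs sched_ok fair]
  have "n \<in> Proc n - Faulty ?F" using assms by (auto simp: Faulty_def Proc_def)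
  then obtain T d where dec: "decision A (lstates (configs A (k_zeros k) ?w T) n) = Some d"
    using run(1) by blast
  have "{p \<in> Proc n. k_zeros k p = 0} = {1..k}" using assms by (auto simp: Proc_def k_zeros_def)
  then have "kTAg_prob k (Proc n) ?F (k_zeros k) = {0}" by (simp add: kTAg_prob_def)
  then have "d = 0" using run(2) dec \<open>n \<in> Proc n - Faulty ?F\<close> by (auto simp: kTAg_def)
  then show ?thesis using dec by blast
qed

lemma decides_one_when_k_slow:
  fixes A :: "('s, 'm) algorithm"
  assumes solves: "solves_with n A (kTAg k n f) (Cons n fo)" and "1 \<le> k" and "k \<le> f" and "k < n"
    and dec: "decision A (lstates (configs A (k_zeros k) (round_robin (Suc k) (n - k)) T) n) = Some d"
  shows "d = 1"
proof -
  let ?w1 = "round_robin (Suc k) (n - k)"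
  let ?w = "\<lambda>t. if t < T then ?w1 t else round_robin k (Suc (n - k)) (t - T)"
    and ?F = "\<lambda>t::nat. {1..k - 1}" and ?V = "\<lambda>p::nat. 1::nat"
  have pattern: "failure_pattern (Proc n) ?F"
    using assms by (auto simp: failure_pattern_def mono_def Proc_def)
  have bound: "card (Faulty ?F) \<le> snd (kTAg k n f)" using assms by (simp add: Faulty_def kTAg_def)
  have inputs: "binvec (Proc n) ?V" by (simp add: binvec_def)
  have sched_ok: "\<forall>t. ?w t \<in> Proc n \<and> ?w t \<notin> ?F t"
  proof
    fix t
    have "Suc k \<le> ?w1 t \<and> ?w1 t < Suc k + (n - k)" using assms by (intro round_robin_bounds) simp
    moreover have "k \<le> round_robin k (Suc (n - k)) (t - T)"
      and "round_robin k (Suc (n - k)) (t - T) < k + Suc (n - k)"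
      using round_robin_bounds[of "Suc (n - k)" k] by simp_all
    ultimately show "?w t \<in> Proc n \<and> ?w t \<notin> ?F t" using assms by (auto simp: Proc_def)
  qed
  have fair: "\<forall>p \<in> Proc n - Faulty ?F. \<forall>t. \<exists>t'\<ge>t. ?w t' = p"
  proof (intro ballI allI)
    fix p t assume "p \<in> Proc n - Faulty ?F"
    then have "k \<le> p" "p < k + Suc (n - k)" using assms by (auto simp: Faulty_def Proc_def)
    then obtain t' where "t' \<ge> t" "round_robin k (Suc (n - k)) t' = p"
      using round_robin_infinitely_often by blast
    then show "\<exists>t'\<ge>t. ?w t' = p" by (intro exI[of _ "T + t'"]) auto
  qed
  note run = solves_with_canonical_run[OF solves pattern bound inputs sched_ok fair]
  \<comment> \<open>processes \<open>1..k\<close> take no step before \<open>T\<close>, so process \<open>n\<close> cannot tell the two runs apart\<close>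
  have "lstates (configs A ?V ?w T) n = lstates (configs A (k_zeros k) ?w1 T) n"
    using configs_agree_outside[of T ?w1 ?w "{..k}" "k_zeros k" ?V T A] assms
    by (simp add: round_robin_def k_zeros_def)
  then have "decision A (lstates (configs A ?V ?w T) n) = Some d" using dec by simp
  moreover have "n \<in> Proc n" using assms by (simp add: Proc_def)
  ultimately have "d \<in> fst (kTAg k n f) ?F ?V" using run(2) by blast
  then show "d = 1" using assms by (simp add: kTAg_def kTAg_prob_def Faulty_def)
qed

theorem kTAg_not_solvable_with_Cons_oracle:
  fixes A :: "('s, 'm) algorithm"
  assumes "1 \<le> k" and "k \<le> f" and "k < n"
  shows "\<not> solves_with n A (kTAg k n f) (Cons n fo)"
proof
  assume solves: "solves_with n A (kTAg k n f) (Cons n fo)"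
  then obtain T where "decision A (lstates (configs A (k_zeros k) (round_robin (Suc k) (n - k)) T) n) = Some 0"
    using decides_zero_when_k_crashed assms(2,3) by blast
  then have "(0::nat) = 1" using decides_one_when_k_slow[OF solves assms] by blast
  then show False by simp
qed

theorem mainTheorem9:
  fixes n f k :: nat
  assumes "1 \<le> k" and "k \<le> f" and "f \<le> n - 1"
  shows "(\<forall>A :: ('s, 'm) algorithm. \<not> solves_with n A (kTAg k n f) (Cons n (n - 1)))
       \<and> (\<forall>A :: ('s, 'm) algorithm. \<not> solves_with n A (kTAg k n f) (Cons n f))"
proof -
  have "k < n" using assms by arith
  then show ?thesis using kTAg_not_solvable_with_Cons_oracle assms(1,2) by blast
qed

end
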